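(* Let $b\ge 3$ be an integer and $D \subset \{0,\ldots,b-1\}$ with $2 \le \#D \le b-1$. Let $n \geq 1$ and $p$ be integers and let $\psi(n)>0$ satisfy $\psi(n) < b^{-n}/2$. Put $d_{l,n} = \frac{m_{l}}{(b-1)b^n}$ and $d_{r,n} = \frac{m_{r}}{(b-1)b^n}$. Using the convention that an open ball with non-positive radius is the empty set: (1) If $p b^{-n} \in L_{n} \setminus R_{n}$, then $B\left(\frac{p}{b^{n}},\psi(n)\right) \cap C(b,D) = B\left(\frac{p}{b^{n}} + d_{l,n},\psi(n)-d_{l,n}\right) \cap C(b,D)$. (2) If $p b^{-n} \in R_{n} \setminus L_{n}$, then $B\left(\frac{p}{b^{n}},\psi(n)\right) \cap C(b,D) = B\left(\frac{p}{b^{n}} - d_{r,n},\psi(n)-d_{r,n}\right) \cap C(b,D)$. (3) If $p b^{-n} \in L_{n} \cup R_{n}$, then $B\left(\frac{p}{b^{n}},\psi(n)\right) \cap C(b,D) = \left(B\left(\frac{p}{b^{n}} + d_{l,n},\psi(n)-d_{l,n}\right) \cup B\left(\frac{p}{b^{n}} - d_{r,n},\psi(n)-d_{r,n}\right) \right) \cap C(b,D)$. (4) If $p b^{-n} \notin L_{n} \cup R_{n}$, then $B\left(\frac{p}{b^{n}},\psi(n)\right) \cap C(b,D) = \emptyset$.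
   Context: $C(b,D)$ is the set of $x\in[0,1]$ whose base-$b$ expansion uses only digits from $D$. $B(x,r)$ denotes the open interval $(x-r,x+r)$. The $n$-th level $C_n(b,D) = \{\sum_{i\ge1} x_i b^{-i} \in [0,1] : x_i \in D \text{ for } i=1,\ldots,n\}$ is a union of $(\#D)^n$ closed intervals of length $b^{-n}$; $L_n$ is the set of left endpoints and $R_n$ the set of right endpoints of these intervals (a point may lie in both). $m_l = \min D$ and $m_r = b-1-\max D$. *)

theory Defs
  imports "HOL-Analysis.Analysis"
begin

definition cantor_set :: "nat \<Rightarrow> nat set \<Rightarrow> real set" where
  "cantor_set b D = {x. 0 \<le> x \<and> x \<le> 1 \<and>
      (\<exists>d::nat \<Rightarrow> nat. (\<forall>i. d i \<in> D) \<and> x = (\<Sum>i. real (d i) / real b ^ Suc i))}"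

definition left_endpoints :: "nat \<Rightarrow> nat set \<Rightarrow> nat \<Rightarrow> real set" where
  "left_endpoints b D n =
     {(\<Sum>i<n. real (d i) / real b ^ Suc i) | d::nat \<Rightarrow> nat. \<forall>i<n. d i \<in> D}"

definition right_endpoints :: "nat \<Rightarrow> nat set \<Rightarrow> nat \<Rightarrow> real set" where
  "right_endpoints b D n =
     {(\<Sum>i<n. real (d i) / real b ^ Suc i) + 1 / real b ^ n | d::nat \<Rightarrow> nat. \<forall>i<n. d i \<in> D}"

definition m_l :: "nat set \<Rightarrow> real" where
  "m_l D = real (Min D)"

definition m_r :: "nat \<Rightarrow> nat set \<Rightarrow> real" where
  "m_r b D = real b - 1 - real (Max D)"

end

theory Submission imports Defs begin

text \<open>Every point y of C(b,D) lies in a level-n interval [a, a + b^-n] with a \<in> L_n; since all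
  later digits lie between min D and max D, y even lies in [a + d_l, a + b^-n - d_r].
  A grid point p/b^n closer than b^-n/2 to y must then be one of the two endpoints a or a + b^-n,
  and accordingly y lies at distance at least d_l to the right of it or d_r to the left of it.
  As d_l, d_r \<ge> 0, the four identities then follow from inclusions between balls; of the
  hypotheses only b \<ge> 2, D \<subseteq> {0..b-1}, D \<noteq> {} and \<psi> < b^-n/2 are needed.\<close>

lemma geometric_sums_Suc:
  fixes q c :: real
  assumes "1 < q"
  shows "(\<lambda>i. c / q ^ Suc i) sums (c / (q - 1))"
proof -
  have "(\<lambda>i. c / q * (1 / q) ^ i) sums (c / q * (1 / (1 - 1 / q)))"
    by (intro sums_mult geometric_sums) (use assms in simp)
  moreover have "(\<lambda>i. c / q * (1 / q) ^ i) = (\<lambda>i. c / q ^ Suc i)"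
    by (simp add: power_one_over)
  moreover have "c / q * (1 / (1 - 1 / q)) = c / (q - 1)"
    using assms by (simp add: field_simps)
  ultimately show ?thesis
    by metis
qed

lemma digit_series_bounds:
  fixes q lo hi :: real and u :: "nat \<Rightarrow> real"
  assumes "1 < q" and lo: "\<And>i. lo \<le> u i" and hi: "\<And>i. u i \<le> hi"
  shows "summable (\<lambda>i. u i / q ^ Suc i)"
    and "lo / (q - 1) \<le> (\<Sum>i. u i / q ^ Suc i)"
    and "(\<Sum>i. u i / q ^ Suc i) \<le> hi / (q - 1)"
proof -
  have geom: "(\<lambda>i. c / q ^ Suc i) sums (c / (q - 1))" for c
    using geometric_sums_Suc[OF assms(1)] .
  have "norm (u i / q ^ Suc i) \<le> (\<bar>lo\<bar> + \<bar>hi\<bar>) / q ^ Suc i" for i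
  proof -
    have "\<bar>u i\<bar> \<le> \<bar>lo\<bar> + \<bar>hi\<bar>"
      using lo[of i] hi[of i] by linarith
    then show ?thesis
      using assms(1) by (simp add: abs_divide divide_right_mono)
  qed
  then show summ: "summable (\<lambda>i. u i / q ^ Suc i)"
    using geom sums_summable by (blast intro: summable_comparison_test')
  show "lo / (q - 1) \<le> (\<Sum>i. u i / q ^ Suc i)"
    using geom[of lo] summ lo assms(1)
    by (intro sums_le[OF _ _ summable_sums]) (auto intro: divide_right_mono)
  show "(\<Sum>i. u i / q ^ Suc i) \<le> hi / (q - 1)"
    using geom[of hi] summ hi assms(1)
    by (intro sums_le[OF _ summable_sums]) (auto intro: divide_right_mono)
qed

lemma suminf_split_scaled_tail:
  fixes q :: real and u :: "nat \<Rightarrow> real"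
  assumes "0 < q" and summ: "summable (\<lambda>i. u i / q ^ Suc i)"
  shows "(\<Sum>i. u i / q ^ Suc i)
           = (\<Sum>i<n. u i / q ^ Suc i) + (\<Sum>i. u (i + n) / q ^ Suc i) / q ^ n"
proof -
  have shift: "(\<lambda>i. u (i + n) / q ^ Suc (i + n)) = (\<lambda>i. u (i + n) / q ^ Suc i / q ^ n)"
    by (simp add: power_add mult.assoc)
  have "summable (\<lambda>i. u (i + n) / q ^ Suc i / q ^ n)"
    using summ summable_iff_shift[of "\<lambda>i. u i / q ^ Suc i" n] by (simp only: shift)
  then have "summable (\<lambda>i. u (i + n) / q ^ Suc i)"
    by (subst (asm) summable_divide_iff) (use assms(1) in simp)
  then have "(\<Sum>i. u (i + n) / q ^ Suc (i + n)) = (\<Sum>i. u (i + n) / q ^ Suc i) / q ^ n"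
    by (simp only: shift suminf_divide)
  then show ?thesis
    using suminf_split_initial_segment[OF summ, of n] by simp
qed

lemma finite_digit_sum_times_power:
  assumes "0 < q"
  shows "(\<Sum>i<n. real (d i) / real q ^ Suc i) * real q ^ n = real (\<Sum>i<n. d i * q ^ (n - Suc i))"
proof -
  have "real (d i) / real q ^ Suc i * real q ^ n = real (d i * q ^ (n - Suc i))" if "i < n" for i
  proof -
    from \<open>i < n\<close> have "Suc i + (n - Suc i) = n"
      by simp
    then have "real q ^ n = real q ^ Suc i * real q ^ (n - Suc i)"
      by (metis power_add)
    then show ?thesis
      using assms by simp
  qed
  then show ?thesis
    by (simp add: sum_distrib_right)
qed

lemma int_near_unit_interval:
  fixes k p :: int and t :: real
  assumes "real_of_int k \<le> t" "t \<le> real_of_int k + 1" "\<bar>real_of_int p - t\<bar> < 1 / 2"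
  shows "p = k \<or> p = k + 1"
proof -
  have "k - 1 < p" "p < k + 2"
    using assms by linarith+
  then show ?thesis
    by linarith
qed

lemma m_l_nonneg: "0 \<le> m_l D"
  unfolding m_l_def by simp

lemma m_r_nonneg:
  assumes "0 < b" "D \<subseteq> {0..b-1}" "D \<noteq> {}"
  shows "0 \<le> m_r b D"
proof -
  have "Max D \<in> D"
    using assms(2,3) finite_subset by (blast intro: Max_in)
  then have "Max D + 1 \<le> b"
    using assms(1,2) by auto
  then show ?thesis
    unfolding m_r_def by linarith
qed

lemma cantor_set_in_level_interval:
  assumes "2 \<le> b" "D \<subseteq> {0..b-1}" "y \<in> cantor_set b D"
  obtains d where "\<forall>i<n. d i \<in> D"
    and "(\<Sum>i<n. real (d i) / real b ^ Suc i) + m_l D / ((real b - 1) * real b ^ n) \<le> y"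
    and "y \<le> (\<Sum>i<n. real (d i) / real b ^ Suc i) + 1 / real b ^ n
               - m_r b D / ((real b - 1) * real b ^ n)"
proof -
  from assms(3) obtain e where e: "\<forall>i. e i \<in> D"
    and y: "y = (\<Sum>i. real (e i) / real b ^ Suc i)"
    unfolding cantor_set_def by blast
  have q: "1 < real b"
    using assms(1) by simp
  have "finite D"
    using assms(2) finite_subset by blast
  then have lo: "real (Min D) \<le> real (e i)" and hi: "real (e i) \<le> real (Max D)" for i
    using e by auto
  define a where "a = (\<Sum>i<n. real (e i) / real b ^ Suc i)"
  define T where "T = (\<Sum>i. real (e (i + n)) / real b ^ Suc i)"
  have y_split: "y = a + T / real b ^ n"
    unfolding y a_def T_def using q digit_series_bounds(1)[OF q lo hi]
    by (intro suminf_split_scaled_tail) simp_all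
  have "real (Min D) / (real b - 1) \<le> T" "T \<le> real (Max D) / (real b - 1)"
    unfolding T_def using digit_series_bounds(2,3)[OF q lo hi] by simp_all
  moreover have "0 \<le> real b ^ n"
    by simp
  ultimately have "real (Min D) / (real b - 1) / real b ^ n \<le> T / real b ^ n"
    and "T / real b ^ n \<le> real (Max D) / (real b - 1) / real b ^ n"
    by (blast intro: divide_right_mono)+
  moreover have "m_l D / ((real b - 1) * real b ^ n) = real (Min D) / (real b - 1) / real b ^ n"
    unfolding m_l_def by simp
  moreover have "1 / real b ^ n - m_r b D / ((real b - 1) * real b ^ n)
                   = real (Max D) / (real b - 1) / real b ^ n"
    unfolding m_r_def using q by (simp add: field_simps)
  ultimately have "a + m_l D / ((real b - 1) * real b ^ n) \<le> y"
    and "y \<le> a + 1 / real b ^ n - m_r b D / ((real b - 1) * real b ^ n)"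
    using y_split by linarith+
  then show ?thesis
    using that[of e] e unfolding a_def by blast
qed

lemma cantor_set_near_grid_point:
  fixes b n :: nat and D :: "nat set" and p :: int
  defines "x \<equiv> real_of_int p / real b ^ n"
    and "dl \<equiv> m_l D / ((real b - 1) * real b ^ n)"
    and "dr \<equiv> m_r b D / ((real b - 1) * real b ^ n)"
  assumes "2 \<le> b" "D \<subseteq> {0..b-1}" "y \<in> cantor_set b D"
    and near: "\<bar>x - y\<bar> < 1 / real b ^ n / 2"
  shows "(x \<in> left_endpoints b D n \<and> x + dl \<le> y) \<or> (x \<in> right_endpoints b D n \<and> y \<le> x - dr)"
proof -
  define B where "B = real b ^ n"
  have "0 < B"
    unfolding B_def using assms(4) by simp
  obtain d where d: "\<forall>i<n. d i \<in> D"
    and lo: "(\<Sum>i<n. real (d i) / real b ^ Suc i) + dl \<le> y"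
    and hi: "y \<le> (\<Sum>i<n. real (d i) / real b ^ Suc i) + 1 / B - dr"
    using cantor_set_in_level_interval[OF assms(4-6)] unfolding dl_def dr_def B_def by blast
  define a where "a = (\<Sum>i<n. real (d i) / real b ^ Suc i)"
  have "D \<noteq> {}"
    using assms(6) unfolding cantor_set_def by blast
  then have "0 \<le> dl" "0 \<le> dr"
    unfolding dl_def dr_def using assms(4) m_l_nonneg m_r_nonneg[of b D] assms(5) by simp_all
  define k where "k = int (\<Sum>i<n. d i * b ^ (n - Suc i))"
  have aB: "a * B = real_of_int k"
    unfolding a_def B_def k_def using finite_digit_sum_times_power assms(4) by simp
  have xB: "x * B = real_of_int p"
    unfolding x_def B_def using assms(4) by simp
  have "a * B \<le> y * B" "y * B \<le> (a + 1 / B) * B"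
    using lo hi \<open>0 < B\<close> \<open>0 \<le> dl\<close> \<open>0 \<le> dr\<close> unfolding a_def
    by (intro mult_right_mono; simp)+
  then have "real_of_int k \<le> y * B" "y * B \<le> real_of_int k + 1"
    using aB \<open>0 < B\<close> by (simp_all add: distrib_right)
  moreover have "\<bar>real_of_int p - y * B\<bar> < 1 / 2"
  proof -
    have "real_of_int p - y * B = (x - y) * B"
      using xB by (simp add: left_diff_distrib)
    then have "\<bar>real_of_int p - y * B\<bar> = \<bar>x - y\<bar> * B"
      using \<open>0 < B\<close> by (simp add: abs_mult)
    also have "\<dots> < 1 / B / 2 * B"
      using near \<open>0 < B\<close> unfolding B_def by (intro mult_strict_right_mono) auto
    also have "\<dots> = 1 / 2"
      using \<open>0 < B\<close> by simp
    finally show ?thesis .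
  qed
  ultimately consider "p = k" | "p = k + 1"
    using int_near_unit_interval by blast
  then show ?thesis
  proof cases
    case 1
    then have "x * B = a * B"
      using aB xB by simp
    then have "x = a"
      using \<open>0 < B\<close> by simp
    then show ?thesis
      using d lo unfolding a_def left_endpoints_def by blast
  next
    case 2
    then have "x * B = (a + 1 / B) * B"
      using aB xB \<open>0 < B\<close> by (simp add: distrib_right)
    then have "x = a + 1 / B"
      using \<open>0 < B\<close> by simp
    then show ?thesis
      using d hi unfolding a_def B_def right_endpoints_def by auto
  qed
qed

theorem lemma3p2:
  fixes b :: nat and D :: "nat set" and n :: nat and p :: int and psi :: real
  assumes "b \<ge> 3"
    and "D \<subseteq> {0..b-1}"
    and "2 \<le> card D" and "card D \<le> b - 1"
    and "n \<ge> 1"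
    and "psi > 0" and "psi < (1 / real b ^ n) / 2"
  defines "x \<equiv> real_of_int p / real b ^ n"
    and "dl \<equiv> m_l D / ((real b - 1) * real b ^ n)"
    and "dr \<equiv> m_r b D / ((real b - 1) * real b ^ n)"
  shows
    "(x \<in> left_endpoints b D n - right_endpoints b D n \<longrightarrow>
        ball x psi \<inter> cantor_set b D = ball (x + dl) (psi - dl) \<inter> cantor_set b D)
   \<and> (x \<in> right_endpoints b D n - left_endpoints b D n \<longrightarrow>
        ball x psi \<inter> cantor_set b D = ball (x - dr) (psi - dr) \<inter> cantor_set b D)
   \<and> (x \<in> left_endpoints b D n \<union> right_endpoints b D n \<longrightarrow>
        ball x psi \<inter> cantor_set b D
          = (ball (x + dl) (psi - dl) \<union> ball (x - dr) (psi - dr)) \<inter> cantor_set b D)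
   \<and> (x \<notin> left_endpoints b D n \<union> right_endpoints b D n \<longrightarrow>
        ball x psi \<inter> cantor_set b D = {})"
proof -
  let ?C = "cantor_set b D" and ?L = "left_endpoints b D n" and ?R = "right_endpoints b D n"
  have "D \<noteq> {}"
    using assms(3) by auto
  then have "0 \<le> dl" "0 \<le> dr"
    unfolding dl_def dr_def using assms(1,2) m_l_nonneg m_r_nonneg[of b D] by simp_all
  have near: "(x \<in> ?L \<and> y \<in> {x + dl..}) \<or> (x \<in> ?R \<and> y \<in> {..x - dr})"
    if "y \<in> ball x psi \<inter> ?C" for y
    using cantor_set_near_grid_point[of b D y p n] that assms(1,2,7)
    unfolding x_def dl_def dr_def by (auto simp: dist_real_def)
  have "ball x psi \<inter> {x + dl..} \<subseteq> ball (x + dl) (psi - dl)"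
    and "ball x psi \<inter> {..x - dr} \<subseteq> ball (x - dr) (psi - dr)"
    and "ball (x + dl) (psi - dl) \<subseteq> ball x psi"
    and "ball (x - dr) (psi - dr) \<subseteq> ball x psi"
    using \<open>0 \<le> dl\<close> \<open>0 \<le> dr\<close> by (auto simp: ball_subset_ball_iff dist_real_def)
  then show ?thesis
    using near by blast
qed

end
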